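(* Let $k\in\mathbb{N}$ with $6\mid k$, let $h$ be an integer with $\gcd(h,k)=1$, and let $h'$ be an integer with $hh'\equiv-1\pmod{36k}$. Then $$\frac{\omega_{h,\frac{k}{6}}\,\omega_{h,\frac{k}{2}}\, \omega_{h,k}}{\omega_{h, \frac{k}{3}}}= \exp\!\left(-\frac{2\pi i}{36k} \left(18k + h\left(-9-9k-4k^2\right) + h' \left(9-2k^2 \right) \right)\right)$$ and $$\frac{\omega_{h,\frac{k}{3}}\,\omega_{h,\frac{k}{2}}\,\omega_{h,k}}{\omega_{h,\frac{k}{6}}^3} =\exp\!\left(- \frac{2\pi i}{18k} \left(h \left(9-2k^2 \right) + h'\left(-9-k^2 \right) \right)\right).$$
   Context: For coprime integers $h$ and $K\ge1$, $\omega_{h,K}=\exp(\pi i\, s(h,K))$, where $s(h,K)=\sum_{r=1}^{K-1}\frac{r}{K}\left(\frac{hr}{K}-\lfloor \frac{hr}{K}\rfloor-\frac12\right)$ is the Dedekind sum. Equivalently, with $\tilde h$ any integer satisfying $h\tilde h\equiv-1\pmod K$ and $\left(\frac{\cdot}{\cdot}\right)$ the Kronecker symbol: $\omega_{h,K}=\left(\frac{-K}{h}\right)\exp\!\left(-\pi i\left(\frac14(2-hK-h)+\frac1{12}(K-\frac1K)(2h-\tilde h+h^2\tilde h)\right)\right)$ if $h$ is odd, and $\omega_{h,K}=\left(\frac{-h}{K}\right)\exp\!\left(-\pi i\left(\frac14(K-1)+\frac1{12}(K-\frac1K)(2h-\tilde h+h^2\tilde h)\right)\right)$ if $K$ is odd.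 *)

theory Defs
  imports "HOL-Number_Theory.Number_Theory" "HOL-Analysis.Analysis"
begin

definition dedekind_sum :: "int \<Rightarrow> int \<Rightarrow> real" where
  "dedekind_sum h K = (\<Sum>r\<in>{1..K-1}. (of_int r / of_int K) *
      (of_int (h*r) / of_int K - of_int \<lfloor>of_int (h*r) / (of_int K :: real)\<rfloor> - 1/2))"

definition omega :: "int \<Rightarrow> int \<Rightarrow> complex" where
  "omega h K = exp (of_real pi * \<i> * of_real (dedekind_sum h K))"

end

theory Submission
  imports Defs
begin

(* Write D(h,K) = 12 K s(h,K), an integer, and T(a,n) = sum_{0<r<n} r floor(a r / n). Dedekind
   reciprocity h D(h,K) + K D(K,h) = h^2 + K^2 + 1 - 3 h K determines h D(h,K) up to the term
   12 K T(K,h). For k = 6m both exponents come from combinations sum_K c_K D(h,K) over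
   K = m, 2m, 3m, 6m in which every 12 K c_K is 216 m modulo 432 m, so h times the combination is
   known modulo 432 m once T(m,h) + T(2m,h) + T(3m,h) + T(6m,h) is even. Modulo 2, T(K,h) is the
   number of inversions of r -> K r mod h plus sum_r floor(K r / h); the inversion parity is the
   sign, hence multiplicative in K, and (m 3m)(2m 6m) is a square, which gives the parity.
   The hypothesis h h' = -1 (mod 36 k) then turns the polynomial part into the stated exponents. *)

definition weighted_floor_sum :: "int \<Rightarrow> int \<Rightarrow> int" where
  "weighted_floor_sum a n = (\<Sum>r\<in>{1..n-1}. r * (a * r div n))"

definition dedekind_numerator :: "int \<Rightarrow> int \<Rightarrow> int" where
  "dedekind_numerator h K = 2*h*(K-1)*(2*K-1) - 12 * weighted_floor_sum h K - 3*K*(K-1)"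

lemma double_gauss_sum_int: "0 \<le> N \<Longrightarrow> 2 * (\<Sum>r\<in>{1..N}. r) = N * (N + 1::int)"
proof (induction N rule: int_ge_induct)
  case (step N)
  have "{1..N+1} = insert (N+1) {1..N}" using step by auto
  then show ?case using step by (simp add: algebra_simps)
qed simp

lemma six_sum_squares_int:
  "0 \<le> N \<Longrightarrow> 6 * (\<Sum>r\<in>{1..N}. r^2) = N * (N + 1) * (2*N + 1::int)"
proof (induction N rule: int_ge_induct)
  case (step N)
  have "{1..N+1} = insert (N+1) {1..N}" using step by auto
  then show ?case using step by (simp add: algebra_simps power2_eq_square)
qed simp

lemma of_int_dedekind_numerator:
  assumes "K > 0"
  shows "real_of_int (dedekind_numerator h K) = 12 * of_int K * dedekind_sum h K"
proof -
  have K: "real_of_int K \<noteq> 0" using assms by simp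
  have squares: "6 * (\<Sum>r\<in>{1..K-1}. r^2) = (K-1)*K*(2*K-1)"
    using six_sum_squares_int[of "K-1"] assms by (simp add: algebra_simps)
  have gauss: "2 * (\<Sum>r\<in>{1..K-1}. r) = (K-1)*K"
    using double_gauss_sum_int[of "K-1"] assms by (simp add: algebra_simps)
  have "of_int K * (12 * of_int K * dedekind_sum h K)
      = (\<Sum>r\<in>{1..K-1}. real_of_int (12*h*r^2 - 12*K*(r*(h*r div K)) - 6*K*r))"
    unfolding dedekind_sum_def sum_distrib_left floor_divide_of_int_eq
    by (rule sum.cong) (use K in \<open>auto simp: field_simps power2_eq_square\<close>)
  also have "\<dots> = of_int (2*h*(6*(\<Sum>r\<in>{1..K-1}. r^2)) - 12*K*weighted_floor_sum h K
                     - 3*K*(2*(\<Sum>r\<in>{1..K-1}. r)))"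
    unfolding weighted_floor_sum_def
    by (simp add: sum_subtractf sum.distrib sum_distrib_left of_int_sum algebra_simps)
  also have "\<dots> = of_int K * of_int (dedekind_numerator h K)"
    unfolding squares gauss dedekind_numerator_def by (simp add: algebra_simps)
  finally show ?thesis using K by simp
qed

lemma dedekind_sum_add_mult:
  assumes "K > 0"
  shows "dedekind_sum (h + K*t) K = dedekind_sum h K"
  unfolding dedekind_sum_def floor_divide_of_int_eq
proof (rule sum.cong)
  fix r
  have "(h + K*t) * r div K = h*r div K + t*r" using assms by (simp add: algebra_simps)
  then show "real_of_int r / real_of_int K * (real_of_int ((h + K*t) * r) / real_of_int K -
         real_of_int ((h + K*t) * r div K) - 1/2) =
         real_of_int r / real_of_int K * (real_of_int (h*r) / real_of_int K - real_of_int (h*r div K) - 1/2)"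
    using assms by (simp add: field_simps)
qed simp

lemma dedekind_numerator_mod:
  assumes "K > 0" "K dvd n"
  shows "dedekind_numerator (h mod n) K = dedekind_numerator h K"
proof -
  obtain e where "n = K*e" using assms(2) by (elim dvdE)
  then have "h = h mod n + K*(e*(h div n))" by (simp add: mult.assoc[symmetric])
  then have "dedekind_sum h K = dedekind_sum (h mod n) K"
    by (metis dedekind_sum_add_mult assms(1))
  then have "real_of_int (dedekind_numerator (h mod n) K) = of_int (dedekind_numerator h K)"
    by (simp add: of_int_dedekind_numerator[OF assms(1)])
  then show ?thesis by (simp only: of_int_eq_iff)
qed

lemma coprime_not_dvd_mult:
  fixes a n r :: int
  assumes "coprime a n" "r \<in> {1..n-1}"
  shows "\<not> n dvd a * r"
proof
  assume "n dvd a * r"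
  with assms(1) have "n dvd r" by (simp add: coprime_commute coprime_dvd_mult_right_iff)
  with assms(2) show False using zdvd_imp_le[of n r] by auto
qed

lemma bij_betw_mult_mod:
  fixes a n :: int
  assumes "n > 0" "coprime a n"
  shows "bij_betw (\<lambda>r. a * r mod n) {1..n-1} {1..n-1}"
proof -
  have into: "(\<lambda>r. a * r mod n) ` {1..n-1} \<subseteq> {1..n-1}"
  proof
    fix y assume "y \<in> (\<lambda>r. a * r mod n) ` {1..n-1}"
    then obtain r where r: "r \<in> {1..n-1}" "y = a * r mod n" by auto
    then have "y \<noteq> 0" using coprime_not_dvd_mult[OF assms(2) r(1)] by (simp add: dvd_eq_mod_eq_0)
    moreover have "0 \<le> y" "y < n" using r assms(1) by auto
    ultimately show "y \<in> {1..n-1}" by auto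
  qed
  have inj: "inj_on (\<lambda>r. a * r mod n) {1..n-1}"
  proof
    fix x y assume xy: "x \<in> {1..n-1}" "y \<in> {1..n-1}" "a * x mod n = a * y mod n"
    have "[a * x = a * y] (mod n)" using xy(3) unfolding Cong.cong_def .
    then have "[x = y] (mod n)" using assms(2) by (simp add: cong_mult_lcancel)
    then show "x = y" using xy by (simp add: Cong.cong_def)
  qed
  show ?thesis using endo_inj_surj[OF _ into inj] inj by (simp add: bij_betw_def)
qed

lemma double_sum_div_mult:
  fixes a n :: int
  assumes "n > 0" "coprime a n"
  shows "2 * (\<Sum>r\<in>{1..n-1}. a * r div n) = (a-1)*(n-1)"
proof -
  have "(\<Sum>r\<in>{1..n-1}. a * r div n) = (\<Sum>r\<in>{1..n-1}. a * (n-r) div n)"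
    by (rule sum.reindex_bij_witness[of _ "\<lambda>r. n-r" "\<lambda>r. n-r"]) auto
  then have "2 * (\<Sum>r\<in>{1..n-1}. a * r div n) = (\<Sum>r\<in>{1..n-1}. a * r div n + a * (n-r) div n)"
    by (simp add: sum.distrib)
  also have "\<dots> = (\<Sum>r\<in>{1..n-1}. a - 1)"
  proof (rule sum.cong)
    fix r assume r: "r \<in> {1..n-1}"
    have "a * r mod n \<noteq> 0"
      using coprime_not_dvd_mult[OF assms(2) r] by (simp add: dvd_eq_mod_eq_0)
    moreover have "a * (n-r) div n = a + (- (a * r)) div n"
    proof -
      have "a * (n-r) div n = (- (a * r) + n * a) div n" by (simp add: algebra_simps)
      also have "\<dots> = a + (- (a * r)) div n" using assms(1) by (subst div_mult_self2) auto
      finally show ?thesis .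
    qed
    ultimately show "a * r div n + a * (n-r) div n = a - 1"
      using assms(1) by (simp add: zdiv_zminus1_eq_if)
  qed simp
  also have "\<dots> = (a-1)*(n-1)" using assms(1) by simp
  finally show ?thesis .
qed

lemma int_div_less_iff_less_mult:
  fixes x n s :: int
  assumes "n > 0"
  shows "x div n < s \<longleftrightarrow> x < n * s"
proof -
  have "x div n = \<lfloor>of_int x / (of_int n :: real)\<rfloor>" by (simp add: floor_divide_of_int_eq)
  then show ?thesis
    using assms by (simp add: floor_less_iff pos_divide_less_eq mult.commute flip: of_int_mult)
qed

lemma div_eq_count_less:
  fixes a n s :: int
  assumes "a > 0" "n > 0" "coprime a n" "s \<in> {1..a-1}"
  shows "n * s div a = (\<Sum>r\<in>{1..n-1}. if a * r < n * s then 1 else 0)"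
proof -
  have less_iff: "a * r < n * s \<longleftrightarrow> r \<le> n * s div a" for r
  proof -
    have "\<not> a dvd n * s"
      using coprime_not_dvd_mult[of n a s] assms(3,4) by (simp add: coprime_commute)
    then have "a * r \<noteq> n * s" by (metis dvd_triv_left)
    then show ?thesis using int_div_less_iff_less_mult[OF assms(1), of "n * s" r] by linarith
  qed
  have "n * s div a < n" using assms by (simp add: int_div_less_iff_less_mult)
  then have "{r\<in>{1..n-1}. a * r < n * s} = {1..n * s div a}" by (auto simp: less_iff)
  then have "(\<Sum>r\<in>{1..n-1}. if a * r < n * s then 1 else 0) = (\<Sum>r\<in>{1..n * s div a}. 1::int)"
    by (simp add: sum.inter_filter[symmetric])
  also have "\<dots> = n * s div a" using assms by (simp add: pos_imp_zdiv_nonneg_iff)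
  finally show ?thesis by simp
qed

lemma double_sum_greater:
  fixes a F :: int
  assumes "0 \<le> F" "F \<le> a - 1"
  shows "2 * (\<Sum>s\<in>{1..a-1}. if F < s then s else 0) = a*(a-1) - F*(F+1)"
proof -
  have "{s\<in>{1..a-1}. s \<le> F} = {1..F}" using assms by auto
  then have "(\<Sum>s\<in>{1..a-1}. if s \<le> F then s else 0) = (\<Sum>s\<in>{1..F}. s)"
    by (simp add: sum.inter_filter[symmetric])
  moreover have "(\<Sum>s\<in>{1..a-1}. if F < s then s else 0)
      = (\<Sum>s\<in>{1..a-1}. s) - (\<Sum>s\<in>{1..a-1}. if s \<le> F then s else 0)"
    by (subst sum_subtractf[symmetric]) (rule sum.cong, auto)
  ultimately show ?thesis
    using double_gauss_sum_int[of "a-1"] double_gauss_sum_int[of F] assms by (simp add: algebra_simps)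
qed

lemma double_weighted_floor_sum_swap:
  fixes a n :: int
  assumes "a > 0" "n > 0" "coprime a n"
  shows "2 * weighted_floor_sum n a = (n-1)*a*(a-1) - (\<Sum>r\<in>{1..n-1}. (a*r div n)^2 + a*r div n)"
proof -
  have "weighted_floor_sum n a = (\<Sum>s\<in>{1..a-1}. \<Sum>r\<in>{1..n-1}. if a*r < n * s then s else 0)"
    unfolding weighted_floor_sum_def sum_distrib_left
    by (rule sum.cong) (simp_all add: div_eq_count_less[OF assms] sum_distrib_left if_distrib cong: if_cong)
  also have "\<dots> = (\<Sum>r\<in>{1..n-1}. \<Sum>s\<in>{1..a-1}. if a*r div n < s then s else 0)"
    by (subst sum.swap) (simp add: int_div_less_iff_less_mult[OF assms(2)])
  finally have "2 * weighted_floor_sum n a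
      = (\<Sum>r\<in>{1..n-1}. 2 * (\<Sum>s\<in>{1..a-1}. if a*r div n < s then s else 0))"
    by (simp add: sum_distrib_left)
  also have "\<dots> = (\<Sum>r\<in>{1..n-1}. a*(a-1) - ((a*r div n)^2 + a*r div n))"
  proof (rule sum.cong)
    fix r assume r: "r \<in> {1..n-1}"
    then have "0 \<le> a*r div n" using assms by (simp add: pos_imp_zdiv_nonneg_iff)
    moreover have "a*r div n < a"
      using r assms by (simp add: int_div_less_iff_less_mult mult.commute)
    ultimately show "2 * (\<Sum>s\<in>{1..a-1}. if a*r div n < s then s else 0)
        = a*(a-1) - ((a*r div n)^2 + a*r div n)"
      using double_sum_greater[of "a*r div n" a] by (simp add: power2_eq_square algebra_simps)
  qed simp
  also have "\<dots> = (n-1)*a*(a-1) - (\<Sum>r\<in>{1..n-1}. (a*r div n)^2 + a*r div n)"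
    using assms by (simp add: sum_subtractf)
  finally show ?thesis .
qed

lemma sum_squares_div_mult:
  fixes a n :: int
  assumes "n > 0" "coprime a n"
  shows "n^2 * (\<Sum>r\<in>{1..n-1}. (a*r div n)^2)
           = (1 - a^2) * (\<Sum>r\<in>{1..n-1}. r^2) + 2*a*n * weighted_floor_sum a n"
proof -
  have pointwise: "n^2 * (a*r div n)^2 = (a*r mod n)^2 - a^2*r^2 + 2*a*n*(r*(a*r div n))" for r
  proof -
    have mod_eq: "a*r mod n = a*r - n*(a*r div n)" by (simp add: minus_div_mult_eq_mod[symmetric] mult.commute)
    show ?thesis unfolding mod_eq by (simp add: power2_eq_square algebra_simps)
  qed
  have "(\<Sum>r\<in>{1..n-1}. (a*r mod n)^2) = (\<Sum>r\<in>{1..n-1}. r^2)"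
    using sum.reindex_bij_betw[OF bij_betw_mult_mod[OF assms], of "\<lambda>x. x^2"] by simp
  then show ?thesis
    unfolding sum_distrib_left pointwise weighted_floor_sum_def
    by (simp add: sum.distrib sum_subtractf sum_distrib_left algebra_simps)
qed

lemma dedekind_numerator_reciprocity:
  fixes a n :: int
  assumes "a > 0" "n > 0" "coprime a n"
  shows "a * dedekind_numerator a n + n * dedekind_numerator n a = a^2 + n^2 + 1 - 3*a*n"
proof -
  define Q where "Q = (\<Sum>r\<in>{1..n-1}. (a*r div n)^2)"
  define S where "S = (\<Sum>r\<in>{1..n-1}. a*r div n)"
  define P where "P = (\<Sum>r\<in>{1..n-1}. r^2)"
  have swap: "2 * weighted_floor_sum n a = (n-1)*a*(a-1) - Q - S"
    using double_weighted_floor_sum_swap[OF assms] unfolding Q_def S_def by (simp add: sum.distrib)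
  have squares: "n^2 * Q = (1 - a^2) * P + 2*a*n * weighted_floor_sum a n"
    unfolding Q_def P_def by (rule sum_squares_div_mult[OF assms(2,3)])
  have floors: "2 * S = (a-1)*(n-1)"
    unfolding S_def by (rule double_sum_div_mult[OF assms(2,3)])
  have gauss: "6 * P = (n-1)*n*(2*n-1)"
    unfolding P_def using six_sum_squares_int[of "n-1"] assms by (simp add: algebra_simps)
  have "n * (a * dedekind_numerator a n + n * dedekind_numerator n a)
      = 2*a^2*n*(n-1)*(2*n-1) - 3*a*n^2*(n-1) + 2*n^3*(a-1)*(2*a-1) - 3*a*n^2*(a-1)
        - 6*(n^2 * Q) + 6*(1 - a^2)*P - 6*n^2*(2 * weighted_floor_sum n a)"
    unfolding dedekind_numerator_def squares by (simp add: algebra_simps power2_eq_square power3_eq_cube)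
  also have "\<dots> = 2*a^2*n*(n-1)*(2*n-1) - 3*a*n^2*(n-1) + 2*n^3*(a-1)*(2*a-1) - 3*a*n^2*(a-1)
        + (1 - a^2)*(6 * P) - 6*n^2*((n-1)*a*(a-1)) + 3*n^2*(2 * S)"
    unfolding swap by (simp add: algebra_simps power2_eq_square power3_eq_cube)
  also have "\<dots> = n * (a^2 + n^2 + 1 - 3*a*n)"
    unfolding gauss floors by (simp add: algebra_simps power2_eq_square power3_eq_cube)
  finally have "n * (a * dedekind_numerator a n + n * dedekind_numerator n a) = n * (a^2 + n^2 + 1 - 3*a*n)" .
  then show ?thesis using assms(2) by simp
qed

definition inversions :: "(int \<Rightarrow> int) \<Rightarrow> int \<Rightarrow> int" where
  "inversions f N = (\<Sum>j\<in>{1..N}. \<Sum>i\<in>{1..j-1}. if f j < f i then 1 else 0)"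

lemma bij_betw_sorted_pair_image:
  fixes \<tau> :: "int \<Rightarrow> int"
  assumes "bij_betw \<tau> {1..N} {1..N}"
  shows "bij_betw (\<lambda>(j, i). (max (\<tau> j) (\<tau> i), min (\<tau> j) (\<tau> i)))
           (Sigma {1..N} (\<lambda>j. {1..j-1})) (Sigma {1..N} (\<lambda>j. {1..j-1}))"
    (is "bij_betw ?\<Phi> ?P ?P")
proof -
  have inj: "inj_on \<tau> {1..N}" and onto: "\<tau> ` {1..N} = {1..N}"
    using assms by (auto simp: bij_betw_def)
  have into: "?\<Phi> p \<in> ?P" if mem: "p \<in> ?P" for p
  proof -
    obtain j i where p: "p = (j, i)" "1 \<le> i" "i < j" "j \<le> N"
      using mem by (cases p) auto
    then have "\<tau> j \<in> {1..N}" "\<tau> i \<in> {1..N}" "\<tau> j \<noteq> \<tau> i"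
      using onto inj_onD[OF inj, of j i] by auto
    then show ?thesis unfolding p(1) by (auto simp: max_def min_def)
  qed
  have "inj_on ?\<Phi> ?P"
  proof (rule inj_onI)
    fix p q assume p: "p \<in> ?P" and q: "q \<in> ?P" and eq: "?\<Phi> p = ?\<Phi> q"
    obtain j i j' i' where pq: "p = (j, i)" "q = (j', i')" by (cases p, cases q)
    have sorted: "{max a b, min a b} = {a, b}" for a b :: int by (auto simp: max_def min_def)
    have "\<tau> ` {j, i} = \<tau> ` {j', i'}"
      using eq sorted[of "\<tau> j" "\<tau> i"] sorted[of "\<tau> j'" "\<tau> i'"] unfolding pq by simp
    then have "{j, i} = {j', i'}" using p q unfolding pq by (subst (asm) inj_on_image_eq_iff[OF inj]) auto
    then show "p = q" using p q unfolding pq by (auto simp: doubleton_eq_iff)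
  qed
  then show ?thesis using endo_inj_surj[OF _ image_subsetI[OF into]] by (simp add: bij_betw_def)
qed

lemma even_inversions_comp:
  fixes \<sigma> \<tau> :: "int \<Rightarrow> int"
  assumes \<sigma>: "bij_betw \<sigma> {1..N} {1..N}" and \<tau>: "bij_betw \<tau> {1..N} {1..N}"
  shows "even (inversions (\<sigma> \<circ> \<tau>) N + inversions \<sigma> N + inversions \<tau> N)"
proof -
  define P where "P = Sigma {1..N} (\<lambda>j. {1..j-1})"
  define \<Phi> where "\<Phi> = (\<lambda>(j, i). (max (\<tau> j) (\<tau> i), min (\<tau> j) (\<tau> i)))"
  define inv_at where "inv_at f = (\<lambda>(j, i). if f j < f i then 1 else 0 :: int)" for f :: "int \<Rightarrow> int"
  have inversions_eq: "inversions f N = (\<Sum>p\<in>P. inv_at f p)" for f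
    unfolding inversions_def P_def inv_at_def by (subst sum.Sigma) auto
  have \<Phi>: "bij_betw \<Phi> P P"
    unfolding \<Phi>_def P_def using bij_betw_sorted_pair_image[OF \<tau>] .
  \<comment> \<open>the composite inverts a pair iff exactly one of \<open>\<tau>\<close> at the pair and \<open>\<sigma>\<close> at its sorted image does\<close>
  have pointwise: "inv_at (\<sigma> \<circ> \<tau>) p
      = inv_at \<tau> p + inv_at \<sigma> (\<Phi> p) - 2 * (inv_at \<tau> p * inv_at \<sigma> (\<Phi> p))"
    if mem: "p \<in> P" for p
  proof -
    obtain j i where p: "p = (j, i)" "1 \<le> i" "i < j" "j \<le> N"
      using mem unfolding P_def by (cases p) auto
    then have "\<tau> j \<in> {1..N}" "\<tau> i \<in> {1..N}" "\<tau> j \<noteq> \<tau> i"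
      using bij_betw_apply[OF \<tau>] bij_betw_imp_inj_on[OF \<tau>] by (auto dest: inj_onD)
    moreover from this have "\<sigma> (\<tau> j) \<noteq> \<sigma> (\<tau> i)"
      using bij_betw_imp_inj_on[OF \<sigma>] by (auto dest: inj_onD)
    ultimately show ?thesis unfolding p(1) inv_at_def \<Phi>_def by (auto simp: max_def min_def)
  qed
  have "(\<Sum>p\<in>P. inv_at \<sigma> (\<Phi> p)) = inversions \<sigma> N"
    unfolding inversions_eq using sum.reindex_bij_betw[OF \<Phi>] by simp
  then have "inversions (\<sigma> \<circ> \<tau>) N
      = inversions \<tau> N + inversions \<sigma> N - 2 * (\<Sum>p\<in>P. inv_at \<tau> p * inv_at \<sigma> (\<Phi> p))"
    unfolding inversions_eq using pointwise
    by (simp add: sum.distrib sum_subtractf sum_distrib_left cong: sum.cong)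
  then show ?thesis by simp
qed

lemma div_diff_mult_eq_mod_less:
  fixes K h i j :: int
  assumes "coprime K h" "1 \<le> i" "i < j" "j \<le> h - 1"
  shows "K*j div h - K*i div h - K*(j-i) div h = (if K*j mod h < K*i mod h then 1 else 0)"
proof -
  define D where "D = K*j div h - K*i div h - K*(j-i) div h"
  have h: "h > 0" using assms by simp
  have bounds: "1 \<le> K*x mod h" "K*x mod h < h" if "x \<in> {1..h-1}" for x
    using coprime_not_dvd_mult[OF assms(1) that] h pos_mod_sign[of h "K*x"] pos_mod_bound[of h "K*x"]
    by (auto simp: dvd_eq_mod_eq_0 order_le_less)
  have "i \<in> {1..h-1}" "j \<in> {1..h-1}" "j - i \<in> {1..h-1}" using assms by auto
  note bi = bounds[OF this(1)] and bj = bounds[OF this(2)] and bd = bounds[OF this(3)]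
  have hD: "h * D = K*i mod h + K*(j-i) mod h - K*j mod h"
  proof -
    have "K*j = K*i + K*(j-i)" by (simp add: algebra_simps)
    moreover have "K*j = h*(K*j div h) + K*j mod h" "K*i = h*(K*i div h) + K*i mod h"
      "K*(j-i) = h*(K*(j-i) div h) + K*(j-i) mod h" by simp_all
    ultimately show ?thesis unfolding D_def by (simp add: algebra_simps)
  qed
  have "h * (-1) < h * D" "h * D < h * 2" using hD bi bj bd by linarith+
  then have "-1 < D" "D < 2" using mult_less_cancel_left_pos[OF h] by blast+
  then consider "D = 0" | "D = 1" by linarith
  then show ?thesis
  proof cases
    case 1
    then have "K*j mod h = K*i mod h + K*(j-i) mod h" using hD by simp
    then show ?thesis using 1 bd(1) unfolding D_def[symmetric] by simp
  next
    case 2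
    then have "K*j mod h = K*i mod h + K*(j-i) mod h - h" using hD by simp
    then show ?thesis using 2 bd(2) unfolding D_def[symmetric] by simp
  qed
qed

lemma sum_triangle_diff:
  fixes F :: "int \<Rightarrow> int"
  assumes "0 \<le> N"
  shows "(\<Sum>j\<in>{1..N}. \<Sum>i\<in>{1..j-1}. F j - F i - F (j-i))
           = (\<Sum>j\<in>{1..N}. F j * (3*j - 2*N - 1))"
  using assms
proof (induction N rule: int_ge_induct)
  case (step N)
  have reflect: "(\<Sum>i\<in>{1..N}. F (N+1-i)) = (\<Sum>i\<in>{1..N}. F i)"
    by (rule sum.reindex_bij_witness[of _ "\<lambda>i. N+1-i" "\<lambda>i. N+1-i"]) auto
  have "{1..N+1} = insert (N+1) {1..N}" using step by auto
  moreover have "(\<Sum>i\<in>{1..N}. F (N+1) - F i - F (N+1-i)) = N * F (N+1) - 2 * (\<Sum>i\<in>{1..N}. F i)"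
    using reflect step by (simp add: sum_subtractf)
  moreover have "(\<Sum>j\<in>{1..N}. F j * (3*j - 2*(N+1) - 1))
      = (\<Sum>j\<in>{1..N}. F j * (3*j - 2*N - 1)) - 2 * (\<Sum>i\<in>{1..N}. F i)"
    by (simp add: sum_subtractf[symmetric] sum_distrib_left algebra_simps)
  ultimately show ?case using step by (simp add: algebra_simps)
qed simp

lemma inversions_mult_mod:
  fixes K h :: int
  assumes "h > 0" "coprime K h"
  shows "inversions (\<lambda>r. K*r mod h) (h-1)
           = 3 * weighted_floor_sum K h - (2*h-1) * (\<Sum>r\<in>{1..h-1}. K*r div h)"
proof -
  have "inversions (\<lambda>r. K*r mod h) (h-1)
      = (\<Sum>j\<in>{1..h-1}. \<Sum>i\<in>{1..j-1}. K*j div h - K*i div h - K*(j-i) div h)"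
    unfolding inversions_def by (intro sum.cong refl) (use div_diff_mult_eq_mod_less[OF assms(2)] in auto)
  also have "\<dots> = (\<Sum>j\<in>{1..h-1}. (K*j div h) * (3*j - 2*(h-1) - 1))"
    using sum_triangle_diff[of "h-1" "\<lambda>x. K*x div h"] assms(1) by simp
  also have "\<dots> = (\<Sum>j\<in>{1..h-1}. 3 * (j * (K*j div h)) - (2*h-1) * (K*j div h))"
    by (rule sum.cong) (auto simp: algebra_simps)
  also have "\<dots> = 3 * weighted_floor_sum K h - (2*h-1) * (\<Sum>r\<in>{1..h-1}. K*r div h)"
    unfolding weighted_floor_sum_def by (simp add: sum_subtractf sum_distrib_left)
  finally show ?thesis .
qed

lemma even_inversions_mult_mod:
  fixes h x y :: int
  assumes "h > 0" "coprime x h" "coprime y h"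
  shows "even (inversions (\<lambda>r. (x*y)*r mod h) (h-1) + inversions (\<lambda>r. x*r mod h) (h-1)
               + inversions (\<lambda>r. y*r mod h) (h-1))"
proof -
  have "(\<lambda>r. (x*y)*r mod h) = (\<lambda>r. x*r mod h) \<circ> (\<lambda>r. y*r mod h)"
    by (rule ext) (simp add: mod_mult_right_eq mult.assoc)
  then show ?thesis
    using even_inversions_comp[OF bij_betw_mult_mod[OF assms(1,2)] bij_betw_mult_mod[OF assms(1,3)]]
    by (simp only:)
qed

lemma even_weighted_floor_sum_add_inversions:
  fixes h K :: int
  assumes "h > 0" "coprime K h"
  shows "even (weighted_floor_sum K h + inversions (\<lambda>r. K*r mod h) (h-1)
               + (\<Sum>r\<in>{1..h-1}. K*r div h))"
proof -
  have "weighted_floor_sum K h + inversions (\<lambda>r. K*r mod h) (h-1) + (\<Sum>r\<in>{1..h-1}. K*r div h)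
      = 2 * (2 * weighted_floor_sum K h - (h-1) * (\<Sum>r\<in>{1..h-1}. K*r div h))"
    unfolding inversions_mult_mod[OF assms] by (simp add: algebra_simps)
  then show ?thesis by (simp only: dvd_triv_left)
qed

lemma even_weighted_floor_sum_multiples:
  fixes h m :: int
  assumes "h > 0" "coprime h (6*m)"
  shows "even (weighted_floor_sum m h + weighted_floor_sum (2*m) h + weighted_floor_sum (3*m) h
               + weighted_floor_sum (6*m) h)"
proof -
  define I where "I a = inversions (\<lambda>r. a*r mod h) (h-1)" for a
  define S where "S a = (\<Sum>r\<in>{1..h-1}. a*r div h)" for a
  have "coprime h (2*3*m)" using assms(2) by simp
  then have cop: "coprime 2 h" "coprime 3 h" "coprime m h"
    by (simp_all only: coprime_mult_right_iff coprime_commute)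
  have T: "even (weighted_floor_sum a h + I a + S a)" if "coprime a h" for a
    unfolding I_def S_def using even_weighted_floor_sum_add_inversions[OF assms(1) that] .
  have I: "even (I (a*b) + I a + I b)" if "coprime a h" "coprime b h" for a b
    unfolding I_def using even_inversions_mult_mod[OF assms(1) that] .
  have "coprime (2*3) h" "coprime (2*2*3) h"
    using cop by (simp_all only: coprime_mult_left_iff)
  then have cop': "coprime (2*m) h" "coprime (3*m) h" "coprime (6*m) h" "coprime (m*(3*m)) h"
    "coprime ((2*m)*(6*m)) h" "coprime (6*m*m) h"
    using cop by simp_all
  \<comment> \<open>the product of the four multipliers is a square, so their inversion parities cancel\<close>
  moreover have "(m*(3*m))*((2*m)*(6*m)) = (6*m*m)*(6*m*m)" by (simp add: algebra_simps)
  ultimately have I4: "even (I ((6*m*m)*(6*m*m)) + I (m*(3*m)) + I ((2*m)*(6*m)))"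
    and I5: "even (I ((6*m*m)*(6*m*m)) + I (6*m*m) + I (6*m*m))"
    using I by metis+
  have "odd h" using cop(1) by simp
  then obtain u where u: "h - 1 = 2*u" by (metis oddE add_diff_cancel_right')
  have S: "S a = (a-1)*u" if "coprime a h" for a
    using double_sum_div_mult[OF assms(1) that] unfolding S_def u by simp
  have "S m + S (2*m) + S (3*m) + S (6*m) = 2 * ((6*m - 2) * u)"
    unfolding S[OF cop(3)] S[OF cop'(1)] S[OF cop'(2)] S[OF cop'(3)] by (simp add: algebra_simps)
  then have "even (S m + S (2*m) + S (3*m) + S (6*m))" by simp
  then show ?thesis
    using T[OF cop(3)] T[OF cop'(1)] T[OF cop'(2)] T[OF cop'(3)] I[OF cop(3) cop'(2)] I[OF cop'(1,3)] I4 I5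
    by (simp only: even_add) argo
qed

definition reciprocity_poly :: "int \<Rightarrow> int \<Rightarrow> int" where
  "reciprocity_poly h K = h^2 + K^2 + 1 - 3*h*K - K*(2*K*(h-1)*(2*h-1) - 3*h*(h-1))"

lemma mult_dedekind_numerator_eq:
  fixes h K :: int
  assumes "h > 0" "K > 0" "coprime h K"
  shows "h * dedekind_numerator h K = reciprocity_poly h K + 12 * K * weighted_floor_sum K h"
  using dedekind_numerator_reciprocity[OF assms]
  unfolding reciprocity_poly_def dedekind_numerator_def[of K h] by (simp add: algebra_simps)

lemma reciprocity_poly_cong:
  "[a = b] (mod n) \<Longrightarrow> [reciprocity_poly a K = reciprocity_poly b K] (mod n)"
  unfolding reciprocity_poly_def by (intro cong_add cong_diff cong_mult cong_pow cong_refl)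

lemma coprime_432_mult_iff:
  fixes h m :: int
  shows "coprime h (432 * m) \<longleftrightarrow> coprime h (6 * m)"
proof -
  have "coprime h (432 * m) \<longleftrightarrow> coprime h (2^4 * 3^3 * m)" by simp
  also have "\<dots> \<longleftrightarrow> coprime h (2 * 3 * m)"
    by (simp only: coprime_mult_right_iff coprime_power_right_iff) simp
  finally show ?thesis by simp
qed

(* The congruences on the c_K say that 12 K c_K = 216 m (mod 432 m) for every K, so the weighted
   floor sums only enter through the parity of their total. *)
lemma dedekind_numerator_combination_cong:
  fixes h m c1 c2 c3 c6 :: int
  assumes "m > 0" "coprime h (6*m)"
    and "[c1 = 18] (mod 36)" "[c2 = 9] (mod 18)" "[c3 = 6] (mod 12)" "[c6 = 3] (mod 6)"
  shows "[h * (c1 * dedekind_numerator h m + c2 * dedekind_numerator h (2*m)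
              + c3 * dedekind_numerator h (3*m) + c6 * dedekind_numerator h (6*m))
          = c1 * reciprocity_poly h m + c2 * reciprocity_poly h (2*m)
              + c3 * reciprocity_poly h (3*m) + c6 * reciprocity_poly h (6*m)] (mod 432*m)"
proof -
  define X where "X g = c1 * dedekind_numerator g m + c2 * dedekind_numerator g (2*m)
    + c3 * dedekind_numerator g (3*m) + c6 * dedekind_numerator g (6*m)" for g
  define Y where "Y g = c1 * reciprocity_poly g m + c2 * reciprocity_poly g (2*m)
    + c3 * reciprocity_poly g (3*m) + c6 * reciprocity_poly g (6*m)" for g
  define T where "T K g = weighted_floor_sum K g" for K g
  obtain q1 q2 q3 q6 where "18 = c1 + 36*q1" "9 = c2 + 18*q2" "6 = c3 + 12*q3" "3 = c6 + 6*q6"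
    using assms(3-6) unfolding cong_iff_lin by blast
  then have c: "c1 = 18 - 36*q1" "c2 = 9 - 18*q2" "c3 = 6 - 12*q3" "c6 = 3 - 6*q6" by linarith+
  have dvd: "m dvd 6*m" "2*m dvd 6*m" "3*m dvd 6*m" by (simp_all add: mult_dvd_mono)
  have positive: "[g * X g = Y g] (mod 432*m)" if g: "g > 0" "coprime g (6*m)" for g
  proof -
    have rec: "g * dedekind_numerator g K = reciprocity_poly g K + 12 * K * T K g"
      if "K > 0" "K dvd 6*m" for K
      using mult_dedekind_numerator_eq \<open>g > 0\<close> coprime_divisors[OF dvd_refl that(2) \<open>coprime g (6*m)\<close>]
      unfolding T_def using that(1) by blast
    obtain w where w: "T m g + T (2*m) g + T (3*m) g + T (6*m) g = 2 * w"
      using even_weighted_floor_sum_multiples[OF g] unfolding T_def by blast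
    have "g * X g = c1 * (g * dedekind_numerator g m) + c2 * (g * dedekind_numerator g (2*m))
        + c3 * (g * dedekind_numerator g (3*m)) + c6 * (g * dedekind_numerator g (6*m))"
      unfolding X_def by (simp add: algebra_simps)
    also have "\<dots> = Y g + 216*m*(T m g + T (2*m) g + T (3*m) g + T (6*m) g)
        - 432*m*(q1 * T m g + q2 * T (2*m) g + q3 * T (3*m) g + q6 * T (6*m) g)"
      using assms(1) dvd unfolding Y_def c by (simp add: rec algebra_simps)
    also have "\<dots> = Y g + 432*m*(w - q1 * T m g - q2 * T (2*m) g - q3 * T (3*m) g - q6 * T (6*m) g)"
      unfolding w by (simp add: algebra_simps)
    finally show ?thesis by (simp add: cong_iff_dvd_diff)
  qed
  \<comment> \<open>reciprocity needs a positive \<open>h\<close>; reducing mod \<open>432 m\<close> changes no \<open>D(h,K)\<close>\<close>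
  define h0 where "h0 = h mod (432*m)"
  have "coprime h (432*m)" using assms(2) coprime_432_mult_iff by blast
  then have "coprime h0 (432*m)" unfolding h0_def using assms(1) by (subst coprime_mod_left_iff) auto
  then have h0: "coprime h0 (6*m)" using coprime_432_mult_iff by blast
  have "h0 \<noteq> 0" using \<open>coprime h0 (432*m)\<close> assms(1) by auto
  moreover have "h0 \<ge> 0" unfolding h0_def using assms(1) by simp
  ultimately have "h0 > 0" by simp
  have "X h0 = X h" unfolding X_def h0_def using assms(1) dvd
    by (simp add: dedekind_numerator_mod dvd_trans[of _ "6*m" "432*m"])
  have cong_h0: "[h0 = h] (mod 432*m)" unfolding h0_def by (simp add: Cong.cong_def)
  have "[h * X h = h0 * X h] (mod 432*m)" using cong_h0 by (intro cong_mult cong_refl) (rule cong_sym)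
  also have "[h0 * X h = Y h0] (mod 432*m)" using positive[OF \<open>h0 > 0\<close> h0] \<open>X h0 = X h\<close> by simp
  also have "[Y h0 = Y h] (mod 432*m)"
    unfolding Y_def by (intro cong_add cong_mult cong_refl reciprocity_poly_cong cong_h0)
  finally show ?thesis unfolding X_def Y_def .
qed

lemma dedekind_numerator_combinations_dvd:
  fixes k h h' :: int
  assumes "k > 0" "6 dvd k" "coprime h k" "[h * h' = -1] (mod (36 * k))"
  shows "72 * k dvd 18 * dedekind_numerator h (k div 6) - 9 * dedekind_numerator h (k div 3)
           + 6 * dedekind_numerator h (k div 2) + 3 * dedekind_numerator h k
           + 2 * (18 * k + h * (-9 - 9 * k - 4 * k^2) + h' * (9 - 2 * k^2))"
    and "72 * k dvd -54 * dedekind_numerator h (k div 6) + 9 * dedekind_numerator h (k div 3)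
           + 6 * dedekind_numerator h (k div 2) + 3 * dedekind_numerator h k
           + 4 * (h * (9 - 2 * k^2) + h' * (-9 - k^2))"
proof -
  obtain m where k: "k = 6*m" using assms(2) by (elim dvdE)
  have "m > 0" using assms(1) k by simp
  have cop: "coprime h (6*m)" "coprime h (432*m)"
    using assms(3) coprime_432_mult_iff unfolding k by blast+
  obtain t where "-1 = h * h' + 216*m*t"
    using assms(4) unfolding k cong_iff_lin by auto
  then have t: "h * h' = -1 - 216*m*t" by linarith
  define D where "D K = dedekind_numerator h K" for K
  define P where "P K = reciprocity_poly h K" for K
  have cancel: "432*m dvd x" if "[h * X = Y] (mod 432*m)" "h * x = (h * X - Y) + 432*m*z" for x X Y z
  proof -
    have "432*m dvd h * x" using that by (simp add: cong_iff_dvd_diff)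
    then show ?thesis using cop(2) by (simp add: coprime_dvd_mult_right_iff coprime_commute)
  qed
  have kd: "k div 6 = m" "k div 3 = 2*m" "k div 2 = 3*m" using k by simp_all
  define X1 where "X1 = 18 * D m + (-9) * D (2*m) + 6 * D (3*m) + 3 * D (6*m)"
  define Y1 where "Y1 = 18 * P m + (-9) * P (2*m) + 6 * P (3*m) + 3 * P (6*m)"
  have cong1: "[h * X1 = Y1] (mod 432*m)"
    unfolding X1_def Y1_def D_def P_def
    by (rule dedekind_numerator_combination_cong[OF \<open>m > 0\<close> cop(1)]) (simp_all add: Cong.cong_def)
  have poly1: "Y1 + 2 * h * (18 * k + h * (-9 - 9 * k - 4 * k^2)) + 2 * (h * h') * (9 - 2 * k^2)
      = 432*m*(- t * (9 - 2 * k^2) - 2*m*h*(h-1))"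
    unfolding Y1_def t P_def k reciprocity_poly_def by (simp add: algebra_simps power2_eq_square)
  moreover have "h * (18 * D m - 9 * D (2*m) + 6 * D (3*m) + 3 * D (6*m)
        + 2 * (18 * k + h * (-9 - 9 * k - 4 * k^2) + h' * (9 - 2 * k^2)))
      = (h * X1 - Y1) + 432*m*(- t * (9 - 2 * k^2) - 2*m*h*(h-1))"
    unfolding poly1[symmetric] X1_def by (simp add: algebra_simps)
  then have "432*m dvd 18 * D m - 9 * D (2*m) + 6 * D (3*m) + 3 * D (6*m)
        + 2 * (18 * k + h * (-9 - 9 * k - 4 * k^2) + h' * (9 - 2 * k^2))"
    by (rule cancel[OF cong1])
  then show "72 * k dvd 18 * dedekind_numerator h (k div 6) - 9 * dedekind_numerator h (k div 3)
           + 6 * dedekind_numerator h (k div 2) + 3 * dedekind_numerator h k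
           + 2 * (18 * k + h * (-9 - 9 * k - 4 * k^2) + h' * (9 - 2 * k^2))"
    unfolding kd D_def by (simp add: k)
  define X2 where "X2 = (-54) * D m + 9 * D (2*m) + 6 * D (3*m) + 3 * D (6*m)"
  define Y2 where "Y2 = (-54) * P m + 9 * P (2*m) + 6 * P (3*m) + 3 * P (6*m)"
  have cong2: "[h * X2 = Y2] (mod 432*m)"
    unfolding X2_def Y2_def D_def P_def
    by (rule dedekind_numerator_combination_cong[OF \<open>m > 0\<close> cop(1)]) (simp_all add: Cong.cong_def)
  have poly2: "Y2 + 4 * h * (h * (9 - 2 * k^2)) + 4 * (h * h') * (-9 - k^2)
      = 432*m*(- 2 * t * (-9 - k^2) - 2*m*h*(h-1))"
    unfolding Y2_def t P_def k reciprocity_poly_def by (simp add: algebra_simps power2_eq_square)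
  moreover have "h * (-54 * D m + 9 * D (2*m) + 6 * D (3*m) + 3 * D (6*m)
        + 4 * (h * (9 - 2 * k^2) + h' * (-9 - k^2)))
      = (h * X2 - Y2) + 432*m*(- 2 * t * (-9 - k^2) - 2*m*h*(h-1))"
    unfolding poly2[symmetric] X2_def by (simp add: algebra_simps)
  then have "432*m dvd -54 * D m + 9 * D (2*m) + 6 * D (3*m) + 3 * D (6*m)
        + 4 * (h * (9 - 2 * k^2) + h' * (-9 - k^2))"
    by (rule cancel[OF cong2])
  then show "72 * k dvd -54 * dedekind_numerator h (k div 6) + 9 * dedekind_numerator h (k div 3)
           + 6 * dedekind_numerator h (k div 2) + 3 * dedekind_numerator h k
           + 4 * (h * (9 - 2 * k^2) + h' * (-9 - k^2))"
    unfolding kd D_def by (simp add: k)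
qed

lemma exp_pi_i_eq_if_congruent:
  fixes x :: real and D N J :: int
  assumes "D \<noteq> 0" "of_int D * x + 2 * of_int N = 2 * of_int D * of_int J"
  shows "exp (of_real pi * \<i> * of_real x) = exp (- (2 * of_real pi * \<i> / of_int D) * of_int N)"
proof -
  have "x = 2 * of_int J - 2 * of_int N / of_int D"
    using assms by (simp add: field_simps)
  then have x: "complex_of_real x = 2 * of_int J - 2 * of_int N / of_int D" by simp
  have "of_real pi * \<i> * of_real x
      = of_real (2 * of_int J * pi) * \<i> + - (2 * of_real pi * \<i> / of_int D) * of_int N"
    unfolding x using assms(1) by (simp add: field_simps)
  moreover have "exp (of_real (2 * of_int J * pi) * \<i>) = 1" by (rule exp_integer_2pi) simp
  ultimately show ?thesis by (simp only: exp_add mult_1)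
qed

lemma omega_quotient_eq:
  "omega h a * omega h b * omega h c / omega h d ^ n
     = exp (of_real pi * \<i> * of_real (dedekind_sum h a + dedekind_sum h b + dedekind_sum h c
                                       - of_nat n * dedekind_sum h d))"
  unfolding omega_def
  by (simp add: exp_add[symmetric] exp_diff[symmetric] exp_of_nat_mult[symmetric] algebra_simps)

lemma of_int_mult_dedekind_sum_div:
  fixes k d h :: int
  assumes "k > 0" "d > 0" "d dvd k"
  shows "of_int k * dedekind_sum h (k div d) = of_int d / 12 * of_int (dedekind_numerator h (k div d))"
proof -
  have "k div d > 0" "of_int k = of_int d * (of_int (k div d) :: real)"
    using assms by (auto simp: pos_imp_zdiv_pos_iff zdvd_imp_le)
  then show ?thesis using of_int_dedekind_numerator[of "k div d" h] by simp
qed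

lemma dedekind_sum_combinations_congruent:
  fixes k h h' :: int
  assumes "k > 0" "6 dvd k" "coprime h k" "[h * h' = -1] (mod (36 * k))"
  obtains j1 j2 :: int where
    "of_int (36 * k) * (dedekind_sum h (k div 6) + dedekind_sum h (k div 2) + dedekind_sum h k
        - dedekind_sum h (k div 3)) + 2 * of_int (18 * k + h * (-9 - 9 * k - 4 * k^2) + h' * (9 - 2 * k^2))
      = 2 * of_int (36 * k) * of_int j1"
    "of_int (18 * k) * (dedekind_sum h (k div 3) + dedekind_sum h (k div 2) + dedekind_sum h k
        - 3 * dedekind_sum h (k div 6)) + 2 * of_int (h * (9 - 2 * k^2) + h' * (-9 - k^2))
      = 2 * of_int (18 * k) * of_int j2"
proof -
  note s = of_int_mult_dedekind_sum_div[OF assms(1)]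
  have "3 dvd k" "2 dvd k" using assms(2) by (auto intro: dvd_trans[of _ 6 k])
  note s6 = s[of 6 h] and s3 = s[of 3 h] and s2 = s[of 2 h] and s1 = s[of 1 h]
  note dvd = dedekind_numerator_combinations_dvd[OF assms]
  obtain j1 where j1: "18 * dedekind_numerator h (k div 6) - 9 * dedekind_numerator h (k div 3)
           + 6 * dedekind_numerator h (k div 2) + 3 * dedekind_numerator h k
           + 2 * (18 * k + h * (-9 - 9 * k - 4 * k^2) + h' * (9 - 2 * k^2)) = 72 * k * j1"
    using dvd(1) by (elim dvdE)
  obtain j2 where j2: "-54 * dedekind_numerator h (k div 6) + 9 * dedekind_numerator h (k div 3)
           + 6 * dedekind_numerator h (k div 2) + 3 * dedekind_numerator h k
           + 4 * (h * (9 - 2 * k^2) + h' * (-9 - k^2)) = 72 * k * j2"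
    using dvd(2) by (elim dvdE)
  show thesis
  proof
    show "of_int (36 * k) * (dedekind_sum h (k div 6) + dedekind_sum h (k div 2) + dedekind_sum h k
        - dedekind_sum h (k div 3)) + 2 * of_int (18 * k + h * (-9 - 9 * k - 4 * k^2) + h' * (9 - 2 * k^2))
      = 2 * of_int (36 * k) * of_int j1"
      using arg_cong[OF j1, of real_of_int] s6 s3 s2 s1 \<open>3 dvd k\<close> \<open>2 dvd k\<close> assms(2)
      by (simp add: algebra_simps)
    show "of_int (18 * k) * (dedekind_sum h (k div 3) + dedekind_sum h (k div 2) + dedekind_sum h k
        - 3 * dedekind_sum h (k div 6)) + 2 * of_int (h * (9 - 2 * k^2) + h' * (-9 - k^2))
      = 2 * of_int (18 * k) * of_int j2"
      using arg_cong[OF j2, of real_of_int] s6 s3 s2 s1 \<open>3 dvd k\<close> \<open>2 dvd k\<close> assms(2)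
      by (simp add: algebra_simps)
  qed
qed

theorem lemma3p1:
  fixes k :: int and h h' :: int
  assumes "k > 0" and "6 dvd k" and "coprime h k"
    and "[h * h' = -1] (mod (36 * k))"
  shows "omega h (k div 6) * omega h (k div 2) * omega h k / omega h (k div 3)
           = exp (- (2 * of_real pi * \<i> / of_int (36 * k)) *
                 of_int (18 * k + h * (-9 - 9 * k - 4 * k^2) + h' * (9 - 2 * k^2)))
       \<and> omega h (k div 3) * omega h (k div 2) * omega h k / (omega h (k div 6))^3
           = exp (- (2 * of_real pi * \<i> / of_int (18 * k)) *
                 of_int (h * (9 - 2 * k^2) + h' * (-9 - k^2)))"
proof -
  obtain j1 j2 where e1: "of_int (36 * k) * (dedekind_sum h (k div 6) + dedekind_sum h (k div 2)
        + dedekind_sum h k - dedekind_sum h (k div 3))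
        + 2 * of_int (18 * k + h * (-9 - 9 * k - 4 * k^2) + h' * (9 - 2 * k^2))
      = 2 * of_int (36 * k) * of_int j1"
    and e2: "of_int (18 * k) * (dedekind_sum h (k div 3) + dedekind_sum h (k div 2)
        + dedekind_sum h k - 3 * dedekind_sum h (k div 6))
        + 2 * of_int (h * (9 - 2 * k^2) + h' * (-9 - k^2))
      = 2 * of_int (18 * k) * of_int j2"
    by (rule dedekind_sum_combinations_congruent[OF assms])
  show ?thesis
    using omega_quotient_eq[of h "k div 6" "k div 2" k "k div 3" 1]
      omega_quotient_eq[of h "k div 3" "k div 2" k "k div 6" 3]
      exp_pi_i_eq_if_congruent[OF _ e1] exp_pi_i_eq_if_congruent[OF _ e2] assms(1)
    by simp
qed

end
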